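(* Let $\kappa\ge2$ and let $\psi^+$ be the rooted balanced 4-taxon tree $((a,b),(c,d))$. Then $$d_\kappa(\psi^+)=\left(\frac{\kappa^2+\kappa}{2}\right)^2-\binom{\kappa}{2}-1=\frac{\kappa(\kappa^3+2\kappa^2-\kappa+2)}{4}-1.$$ In particular this differs from the dimension $\frac{\kappa^4+\kappa}{2}-1$ for the rooted 4-taxon caterpillar, so $d_\kappa$ depends on the rooted topology and not only on the number of taxa.
   Context: For a rooted binary topological tree $\psi^+$ on $X$, $d_\kappa(\psi^+)$ is the dimension of the affine space of real $|X|$-way $\kappa\times\cdots\times\kappa$ tensors $P$ (one index per taxon) whose entries sum to 1 and such that for every $Y\subseteq X$ and every 2-clade $\{x,y\}$ of the induced rooted subtree $\psi^+|_Y$, the marginalization $P_Y$ is invariant under exchanging the $x$ and $y$ indices. A 2-clade is a pair of leaves that are exactly the leaf descendants of some vertex. *)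

theory Defs
  imports "HOL-Analysis.Analysis" "HOL-Library.Function_Algebras"
begin

text \<open>Taxa are encoded as positions 0..n-1; a real n-way kappa x ... x kappa
tensor is a function on index lists (length n, entries < kappa) that vanishes
on all other lists.\<close>

definition idx_tuples :: "nat \<Rightarrow> nat \<Rightarrow> nat list set" where
  "idx_tuples k n = {xs. length xs = n \<and> set xs \<subseteq> {..<k}}"

definition tensors :: "nat \<Rightarrow> nat \<Rightarrow> (nat list \<Rightarrow> real) set" where
  "tensors k n = {P. \<forall>xs. xs \<notin> idx_tuples k n \<longrightarrow> P xs = 0}"

text \<open>Marginalization onto the taxa in Y, viewed as a function of a full index
tuple w (it only depends on the coordinates of w in Y).\<close>

definition marg :: "nat \<Rightarrow> nat \<Rightarrow> nat set \<Rightarrow> (nat list \<Rightarrow> real) \<Rightarrow> nat list \<Rightarrow> real" where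
  "marg k n Y P w = (\<Sum>v \<in> {v \<in> idx_tuples k n. \<forall>i\<in>Y. v ! i = w ! i}. P v)"

definition swap_idx :: "nat \<Rightarrow> nat \<Rightarrow> nat list \<Rightarrow> nat list" where
  "swap_idx x y w = w[x := w ! y, y := w ! x]"

text \<open>A rooted X-tree (X = {0..<n}) is represented by its cluster system: the
leaf-descendant sets of its vertices. The clusters of the induced rooted subtree
on Y are the nonempty sets C \<inter> Y; its 2-clades are those of cardinality 2.\<close>

definition two_clades :: "nat set set \<Rightarrow> nat set \<Rightarrow> nat set set" where
  "two_clades H Y = {S. \<exists>C\<in>H. S = C \<inter> Y \<and> card S = 2}"

definition model_space :: "nat \<Rightarrow> nat \<Rightarrow> nat set set \<Rightarrow> (nat list \<Rightarrow> real) set" where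
  "model_space k n H = {P \<in> tensors k n.
      (\<Sum>xs\<in>idx_tuples k n. P xs) = 1 \<and>
      (\<forall>Y \<subseteq> {..<n}. \<forall>x y. {x, y} \<in> two_clades H Y \<longrightarrow>
          (\<forall>w \<in> idx_tuples k n. marg k n Y P w = marg k n Y P (swap_idx x y w)))}"

definition fscale :: "real \<Rightarrow> ('a \<Rightarrow> real) \<Rightarrow> ('a \<Rightarrow> real)" where
  "fscale c f = (\<lambda>x. c * f x)"

definition affine_dim :: "('a \<Rightarrow> real) set \<Rightarrow> nat" where
  "affine_dim A = vector_space.dim fscale {p - q | p q. p \<in> A \<and> q \<in> A}"

definition d_kappa :: "nat \<Rightarrow> nat \<Rightarrow> nat set set \<Rightarrow> nat" where
  "d_kappa k n H = affine_dim (model_space k n H)"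

text \<open>The balanced rooted 4-taxon tree ((a,b),(c,d)) with a=0, b=1, c=2, d=3.\<close>

definition balanced4 :: "nat set set" where
  "balanced4 = {{0}, {1}, {2}, {3}, {0,1}, {2,3}, {0,1,2,3}}"

end

theory Submission
  imports Defs
begin

text \<open>On the balanced tree the clade conditions say exactly that P is invariant under
exchanging a with b and c with d, and that its (a,c)-marginal is a symmetric matrix.
The differences of model tensors are therefore the tensors with these symmetries and
total sum zero. Such a tensor is determined by its values on the tuples [a,b,c,d] with
a \<le> b and c \<le> d, except the tuples [a,a,c,c] with a < c, whose values are forced by
the symmetry of the marginal, and [0,0,0,0], whose value is forced by the zero sum;
conversely every assignment of values to the remaining tuples extends. Counting these
free tuples gives C(\<kappa>+1,2)^2 - C(\<kappa>,2) - 1.\<close>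

lemma sum_fun_apply: "(sum f A) x = (\<Sum>a\<in>A. f a x)"
  by (induction A rule: infinite_finite_induct) auto

interpretation fs: vector_space "fscale :: real \<Rightarrow> ('a \<Rightarrow> real) \<Rightarrow> _"
  by unfold_locales (auto simp: fscale_def fun_eq_iff algebra_simps)

lemma dim_eq_card_of_dual_family:
  fixes L :: "('a \<Rightarrow> real) set" and Pi :: "'a set" and e :: "'a \<Rightarrow> 'a \<Rightarrow> real"
  assumes sub: "fs.subspace L" and fin: "finite Pi"
    and determined: "\<And>g. g \<in> L \<Longrightarrow> \<forall>p\<in>Pi. g p = 0 \<Longrightarrow> g = 0"
    and eL: "\<And>p. p \<in> Pi \<Longrightarrow> e p \<in> L"
    and dual: "\<And>p q. p \<in> Pi \<Longrightarrow> q \<in> Pi \<Longrightarrow> e p q = (if p = q then 1 else 0)"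
  shows "fs.dim L = card Pi"
proof -
  have inj: "inj_on e Pi"
    by (rule inj_onI) (metis dual zero_neq_one)
  have coord: "(\<Sum>q\<in>Pi. fscale (c q) (e q)) p = c p" if "p \<in> Pi" for c p
  proof -
    have "(\<Sum>q\<in>Pi. fscale (c q) (e q)) p = (\<Sum>q\<in>Pi. if q = p then c q else 0)"
      by (simp add: sum_fun_apply fscale_def) (rule sum.cong, auto simp: dual that)
    then show ?thesis using that fin by simp
  qed
  have ind: "fs.independent (e ` Pi)"
  proof (rule fs.independent_if_scalars_zero)
    fix c x assume "(\<Sum>x\<in>e ` Pi. fscale (c x) x) = 0" and "x \<in> e ` Pi"
    then obtain p where p: "p \<in> Pi" "x = e p" and "(\<Sum>q\<in>Pi. fscale (c (e q)) (e q)) = 0"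
      by (auto simp: sum.reindex[OF inj])
    then show "c x = 0" using coord[of p "c \<circ> e"] by simp
  qed (use fin in simp)
  have span_L: "L \<subseteq> fs.span (e ` Pi)"
  proof
    fix g assume g: "g \<in> L"
    let ?s = "\<Sum>q\<in>Pi. fscale (g q) (e q)"
    have "?s \<in> L"
      by (rule fs.subspace_sum[OF sub]) (auto intro: fs.subspace_scale[OF sub] eL)
    moreover have "\<forall>p\<in>Pi. (g - ?s) p = 0"
      using coord[of _ g] by simp
    ultimately have "g - ?s = 0"
      by (intro determined fs.subspace_diff[OF sub g])
    then have "g = ?s" by simp
    also have "\<dots> \<in> fs.span (e ` Pi)"
      by (intro fs.span_sum fs.span_scale fs.span_base) auto
    finally show "g \<in> fs.span (e ` Pi)" .
  qed
  have "fs.span (e ` Pi) = fs.span L"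
  proof
    show "fs.span (e ` Pi) \<subseteq> fs.span L" using eL by (intro fs.span_mono) auto
    show "fs.span L \<subseteq> fs.span (e ` Pi)"
      using span_L by (intro fs.span_minimal) (auto intro: fs.subspace_span)
  qed
  then have "fs.dim L = card (e ` Pi)" using fs.dim_eq_card ind by metis
  then show ?thesis using card_image[OF inj] by simp
qed

lemma finite_idx_tuples [simp]: "finite (idx_tuples k n)"
proof -
  have "idx_tuples k n = {xs. set xs \<subseteq> {..<k} \<and> length xs = n}"
    by (auto simp: idx_tuples_def)
  then show ?thesis using finite_lists_length_eq[of "{..<k}" n] by simp
qed

lemma length_idx_tuples: "v \<in> idx_tuples k n \<Longrightarrow> length v = n"
  by (simp add: idx_tuples_def)

lemma swap_idx_commute: "swap_idx x y w = swap_idx y x w"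
  by (cases "x = y") (auto simp: swap_idx_def list_update_swap)

lemma nth_swap_idx:
  "x < length w \<Longrightarrow> y < length w \<Longrightarrow> swap_idx x y w ! i = w ! Transposition.transpose x y i"
  by (auto simp: swap_idx_def nth_list_update transpose_def)

lemma swap_idx_swap_idx:
  "x < length w \<Longrightarrow> y < length w \<Longrightarrow> swap_idx x y (swap_idx x y w) = w"
  by (rule nth_equalityI) (auto simp: swap_idx_def nth_list_update)

lemma swap_idx_in_idx_tuples:
  "v \<in> idx_tuples k n \<Longrightarrow> x < n \<Longrightarrow> y < n \<Longrightarrow> swap_idx x y v \<in> idx_tuples k n"
  by (auto simp: idx_tuples_def swap_idx_def dest!: set_update_subset_insert[THEN subsetD])

definition swap_invariant :: "nat \<Rightarrow> nat \<Rightarrow> nat \<Rightarrow> nat \<Rightarrow> (nat list \<Rightarrow> real) \<Rightarrow> bool" where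
  "swap_invariant k n x y P \<longleftrightarrow> (\<forall>v\<in>idx_tuples k n. P (swap_idx x y v) = P v)"

lemma swap_invariant_commute: "swap_invariant k n x y P = swap_invariant k n y x P"
  by (simp add: swap_invariant_def swap_idx_commute)

lemma sum_reindex_swap_idx:
  assumes "x < n" "y < n" "swap_invariant k n x y P"
  shows "sum P {v \<in> idx_tuples k n. Q v} = sum P {v \<in> idx_tuples k n. Q (swap_idx x y v)}"
  by (rule sum.reindex_bij_witness[where i = "swap_idx x y" and j = "swap_idx x y"])
     (use assms in \<open>auto simp: swap_invariant_def swap_idx_swap_idx length_idx_tuples
        swap_idx_in_idx_tuples\<close>)

lemma marg_swap_idx:
  assumes Y: "Y \<subseteq> {..<n}" "x \<in> Y" "y \<in> Y" and P: "swap_invariant k n x y P"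
    and w: "length w = n"
  shows "marg k n Y P (swap_idx x y w) = marg k n Y P w"
proof -
  let ?\<tau> = "Transposition.transpose x y"
  have xy: "x < n" "y < n" using Y by auto
  have swapped: "(\<forall>i\<in>Y. swap_idx x y v ! i = swap_idx x y w ! i) \<longleftrightarrow> (\<forall>i\<in>Y. v ! i = w ! i)"
    if "v \<in> idx_tuples k n" for v
  proof -
    have "(\<forall>i\<in>Y. swap_idx x y v ! i = swap_idx x y w ! i) \<longleftrightarrow> (\<forall>i\<in>?\<tau> ` Y. v ! i = w ! i)"
      using that xy w by (simp add: nth_swap_idx length_idx_tuples)
    also have "?\<tau> ` Y = Y" using Y by (simp add: transpose_image_eq)
    finally show ?thesis .
  qed
  have "marg k n Y P (swap_idx x y w)
      = sum P {v \<in> idx_tuples k n. \<forall>i\<in>Y. swap_idx x y v ! i = swap_idx x y w ! i}"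
    unfolding marg_def by (rule sum_reindex_swap_idx[OF xy P])
  also have "\<dots> = marg k n Y P w"
    unfolding marg_def by (rule arg_cong[where f = "sum P"]) (use swapped in blast)
  finally show ?thesis .
qed

lemma idx_tuples_4_cases:
  assumes "v \<in> idx_tuples k 4"
  obtains a b c d where "v = [a, b, c, d]" "a < k" "b < k" "c < k" "d < k"
  using assms by (auto simp: idx_tuples_def numeral_eq_Suc length_Suc_conv)

lemma Cons_in_idx_tuples_4 [simp]:
  "[a, b, c, d] \<in> idx_tuples k 4 \<longleftrightarrow> a < k \<and> b < k \<and> c < k \<and> d < k"
  by (auto simp: idx_tuples_def)

definition cross_marg :: "nat \<Rightarrow> (nat list \<Rightarrow> real) \<Rightarrow> nat \<Rightarrow> nat \<Rightarrow> real" where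
  "cross_marg k P a c = sum P {v \<in> idx_tuples k 4. v ! 0 = a \<and> v ! 2 = c}"

definition balanced4_invariant :: "nat \<Rightarrow> (nat list \<Rightarrow> real) \<Rightarrow> bool" where
  "balanced4_invariant k P \<longleftrightarrow> P \<in> tensors k 4
     \<and> swap_invariant k 4 0 1 P \<and> swap_invariant k 4 2 3 P
     \<and> (\<forall>a<k. \<forall>c<k. cross_marg k P a c = cross_marg k P c a)"

lemma sum_nth_swap_invariant:
  assumes "x < n" "y < n" "z \<noteq> x" "z \<noteq> y" "swap_invariant k n x y P"
  shows "sum P {v \<in> idx_tuples k n. v ! y = \<alpha> \<and> v ! z = \<beta>}
       = sum P {v \<in> idx_tuples k n. v ! x = \<alpha> \<and> v ! z = \<beta>}"
proof -
  have "sum P {v \<in> idx_tuples k n. v ! x = \<alpha> \<and> v ! z = \<beta>}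
      = sum P {v \<in> idx_tuples k n. swap_idx x y v ! x = \<alpha> \<and> swap_idx x y v ! z = \<beta>}"
    by (rule sum_reindex_swap_idx[OF assms(1,2,5)])
  also have "\<dots> = sum P {v \<in> idx_tuples k n. v ! y = \<alpha> \<and> v ! z = \<beta>}"
    using assms(1-4)
    by (intro arg_cong[where f = "sum P"]) (auto simp: nth_swap_idx length_idx_tuples)
  finally show ?thesis by simp
qed

lemma marg_cross_pair:
  assumes "x \<in> {0, 1}" "y \<in> {2, 3}" "swap_invariant k 4 0 1 P" "swap_invariant k 4 2 3 P"
  shows "marg k 4 {x, y} P w = cross_marg k P (w ! x) (w ! y)"
proof -
  have "marg k 4 {x, y} P w = sum P {v \<in> idx_tuples k 4. v ! x = w ! x \<and> v ! y = w ! y}"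
    by (simp add: marg_def)
  also have "\<dots> = sum P {v \<in> idx_tuples k 4. v ! 0 = w ! x \<and> v ! y = w ! y}"
    using assms sum_nth_swap_invariant[of 0 4 1 y k P] by auto
  also have "\<dots> = sum P {v \<in> idx_tuples k 4. v ! 0 = w ! x \<and> v ! 2 = w ! y}"
    using assms sum_nth_swap_invariant[of 2 4 3 0 k P] by (auto simp: conj_commute)
  finally show ?thesis by (simp add: cross_marg_def)
qed

lemma marg_cross_pair_swap_idx:
  assumes "swap_invariant k 4 0 1 P" "swap_invariant k 4 2 3 P"
    and "\<forall>a<k. \<forall>c<k. cross_marg k P a c = cross_marg k P c a"
    and xy: "x \<in> {0, 1}" "y \<in> {2, 3}" and w: "w \<in> idx_tuples k 4"
  shows "marg k 4 {x, y} P (swap_idx x y w) = marg k 4 {x, y} P w"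
proof -
  have "swap_idx x y w ! x = w ! y" "swap_idx x y w ! y = w ! x"
    using xy w by (auto simp: nth_swap_idx length_idx_tuples)
  moreover have "w ! x < k" "w ! y < k"
    using xy w by (auto elim!: idx_tuples_4_cases)
  ultimately show ?thesis
    using assms by (simp add: marg_cross_pair)
qed

lemma marg_all:
  assumes "w \<in> idx_tuples k n"
  shows "marg k n {..<n} P w = P w"
proof -
  have "{v \<in> idx_tuples k n. \<forall>i\<in>{..<n}. v ! i = w ! i} = {w}"
    using assms by (auto simp: length_idx_tuples intro: nth_equalityI)
  then show ?thesis by (simp add: marg_def)
qed

lemma two_clades_balanced4:
  assumes Y: "Y \<subseteq> {..<4}" and xy: "{x, y} \<in> two_clades balanced4 Y"
  shows "(x, y) \<in> {(0, 1), (1, 0), (2, 3), (3, 2)} \<and> {x, y} \<subseteq> Y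
    \<or> Y = {x, y} \<and> (x \<in> {0, 1} \<and> y \<in> {2, 3} \<or> y \<in> {0, 1} \<and> x \<in> {2, 3})"
proof -
  obtain C where C: "C \<in> balanced4" and xyC: "{x, y} = C \<inter> Y" and "card {x, y} = 2"
    using xy by (auto simp: two_clades_def)
  have "x \<noteq> y" using \<open>card {x, y} = 2\<close> by (cases "x = y") auto
  have "x \<in> C" "y \<in> C" "{x, y} \<subseteq> Y" using xyC by auto
  have "C = {0, 1} \<or> C = {2, 3} \<or> C = {0, 1, 2, 3}"
    using C \<open>x \<in> C\<close> \<open>y \<in> C\<close> \<open>x \<noteq> y\<close> unfolding balanced4_def by fastforce
  then show ?thesis
  proof (elim disjE)
    assume "C = {0, 1, 2, 3}"
    moreover have "{0, 1, 2, 3} \<inter> Y = Y"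
      using Y by (auto simp: numeral_eq_Suc less_Suc_eq)
    ultimately have "Y = {x, y}" using xyC by simp
    then show ?thesis using \<open>x \<in> C\<close> \<open>y \<in> C\<close> \<open>x \<noteq> y\<close> \<open>C = {0, 1, 2, 3}\<close> by auto
  qed (use \<open>x \<in> C\<close> \<open>y \<in> C\<close> \<open>x \<noteq> y\<close> \<open>{x, y} \<subseteq> Y\<close> in auto)
qed

lemma balanced4_clade_conditions_iff:
  "(\<forall>Y \<subseteq> {..<4}. \<forall>x y. {x, y} \<in> two_clades balanced4 Y \<longrightarrow>
      (\<forall>w \<in> idx_tuples k 4. marg k 4 Y P w = marg k 4 Y P (swap_idx x y w)))
   \<longleftrightarrow> swap_invariant k 4 0 1 P \<and> swap_invariant k 4 2 3 P
     \<and> (\<forall>a<k. \<forall>c<k. cross_marg k P a c = cross_marg k P c a)" (is "?clades \<longleftrightarrow> ?sym")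
proof
  assume clades: ?clades
  have "swap_invariant k 4 x y P" if "{x, y} \<in> two_clades balanced4 {..<4}" "x < 4" "y < 4" for x y
    unfolding swap_invariant_def
    using clades that by (metis marg_all swap_idx_in_idx_tuples order_refl)
  moreover have "{0, 1} \<in> two_clades balanced4 {..<4}" "{2, 3} \<in> two_clades balanced4 {..<4}"
    by (auto simp: two_clades_def balanced4_def intro!: bexI[of _ "{0, 1}"] bexI[of _ "{2, 3}"])
  moreover have "cross_marg k P a c = cross_marg k P c a" if "a < k" "c < k" for a c
  proof -
    have "{0, 2} \<in> two_clades balanced4 {0, 2}"
      by (auto simp: two_clades_def balanced4_def intro!: bexI[of _ "{0, 1, 2, 3}"])
    then have "marg k 4 {0, 2} P [a, a, c, c] = marg k 4 {0, 2} P (swap_idx 0 2 [a, a, c, c])"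
      using clades that by auto
    then show ?thesis by (simp add: marg_def cross_marg_def swap_idx_def)
  qed
  ultimately show ?sym by auto
next
  assume sym: ?sym
  show ?clades
  proof (intro allI impI ballI)
    fix Y x y w
    assume Y: "Y \<subseteq> {..<4}" and xy: "{x, y} \<in> two_clades balanced4 Y"
      and w: "w \<in> idx_tuples k 4"
    consider (cherry) "swap_invariant k 4 x y P" "x \<in> Y" "y \<in> Y"
      | (cross) "Y = {x, y}" "x \<in> {0, 1}" "y \<in> {2, 3}"
      | (cross') "Y = {x, y}" "y \<in> {0, 1}" "x \<in> {2, 3}"
      using two_clades_balanced4[OF Y xy] sym swap_invariant_commute by auto
    then show "marg k 4 Y P w = marg k 4 Y P (swap_idx x y w)"
    proof cases
      case cherry
      then show ?thesis using marg_swap_idx[OF Y] w by (simp add: length_idx_tuples)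
    next
      case cross
      then show ?thesis using marg_cross_pair_swap_idx[of k P x y w] sym w by simp
    next
      case cross'
      then show ?thesis using marg_cross_pair_swap_idx[of k P y x w] sym w
        by (simp add: insert_commute swap_idx_commute)
    qed
  qed
qed

lemma model_space_balanced4:
  "model_space k 4 balanced4 = {P. balanced4_invariant k P \<and> sum P (idx_tuples k 4) = 1}"
  unfolding model_space_def balanced4_invariant_def
  using balanced4_clade_conditions_iff[of k] by blast

lemma cross_marg_add: "cross_marg k (P + Q) a c = cross_marg k P a c + cross_marg k Q a c"
  by (simp add: cross_marg_def sum.distrib)

lemma cross_marg_fscale: "cross_marg k (fscale r P) a c = r * cross_marg k P a c"
  by (simp add: cross_marg_def fscale_def sum_distrib_left)

lemma balanced4_invariant_add:
  "balanced4_invariant k P \<Longrightarrow> balanced4_invariant k Q \<Longrightarrow> balanced4_invariant k (P + Q)"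
  by (simp add: balanced4_invariant_def tensors_def swap_invariant_def cross_marg_add)

lemma balanced4_invariant_fscale:
  "balanced4_invariant k P \<Longrightarrow> balanced4_invariant k (fscale r P)"
  by (simp add: balanced4_invariant_def tensors_def swap_invariant_def cross_marg_fscale)
     (simp add: fscale_def)

lemma balanced4_invariant_diff:
  assumes "balanced4_invariant k P" "balanced4_invariant k Q"
  shows "balanced4_invariant k (P - Q)"
proof -
  have "P - Q = P + fscale (-1) Q" by (simp add: fscale_def fun_eq_iff)
  then show ?thesis
    using assms by (metis balanced4_invariant_add balanced4_invariant_fscale)
qed

definition balanced4_directions :: "nat \<Rightarrow> (nat list \<Rightarrow> real) set" where
  "balanced4_directions k = {g. balanced4_invariant k g \<and> sum g (idx_tuples k 4) = 0}"

lemma subspace_balanced4_directions: "fs.subspace (balanced4_directions k)"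
proof -
  have "balanced4_invariant k 0"
    by (simp add: balanced4_invariant_def tensors_def swap_invariant_def cross_marg_def)
  then show ?thesis
    unfolding fs.subspace_def balanced4_directions_def
    by (auto simp: balanced4_invariant_add balanced4_invariant_fscale sum.distrib)
       (simp add: fscale_def sum_distrib_left[symmetric])
qed

lemma model_space_diff_in_directions:
  "P \<in> model_space k 4 balanced4 \<Longrightarrow> Q \<in> model_space k 4 balanced4
    \<Longrightarrow> P - Q \<in> balanced4_directions k"
  by (simp add: model_space_balanced4 balanced4_directions_def balanced4_invariant_diff
      sum_subtractf)

definition sort_cherries :: "nat list \<Rightarrow> nat list" where
  "sort_cherries v =
     [min (v ! 0) (v ! 1), max (v ! 0) (v ! 1), min (v ! 2) (v ! 3), max (v ! 2) (v ! 3)]"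

definition pinned :: "nat list \<Rightarrow> bool" where
  "pinned v \<longleftrightarrow> v ! 0 = v ! 1 \<and> v ! 2 = v ! 3 \<and> v ! 0 < v ! 2"

definition free_tuples :: "nat \<Rightarrow> nat list set" where
  "free_tuples k = {s \<in> idx_tuples k 4.
     s ! 0 \<le> s ! 1 \<and> s ! 2 \<le> s ! 3 \<and> \<not> pinned s \<and> s \<noteq> [0, 0, 0, 0]}"

lemma sort_cherries_4 [simp]:
  "sort_cherries [a, b, c, d] = [min a b, max a b, min c d, max c d]"
  by (simp add: sort_cherries_def)

lemma pinned_4 [simp]: "pinned [a, b, c, d] \<longleftrightarrow> a = b \<and> c = d \<and> a < c"
  by (simp add: pinned_def)

lemma sort_cherries_in_free_tuples_iff:
  "v \<in> idx_tuples k 4 \<Longrightarrow> sort_cherries v \<in> free_tuples k \<longleftrightarrow> \<not> pinned v \<and> v \<noteq> [0, 0, 0, 0]"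
  by (auto elim!: idx_tuples_4_cases simp: free_tuples_def min_def max_def split: if_splits)

lemma sort_cherries_free_tuple: "s \<in> free_tuples k \<Longrightarrow> sort_cherries s = s"
  by (auto elim!: idx_tuples_4_cases simp: free_tuples_def)

lemma swap_invariant_sort_cherries:
  assumes "swap_invariant k 4 0 1 g" "swap_invariant k 4 2 3 g" "v \<in> idx_tuples k 4"
  shows "g (sort_cherries v) = g v"
proof -
  obtain a b c d where v: "v = [a, b, c, d]" "a < k" "b < k" "c < k" "d < k"
    using assms(3) by (rule idx_tuples_4_cases)
  have "g [b, a, c, d] = g [a, b, c, d]" "g [a, b, d, c] = g [a, b, c, d]"
    "g [b, a, d, c] = g [b, a, c, d]"
    using assms v unfolding swap_invariant_def
    by (auto dest: bspec[of _ _ "[a, b, c, d]"] bspec[of _ _ "[b, a, c, d]"] simp: swap_idx_def)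
  then show ?thesis using v(1) by (auto simp: min_def max_def)
qed

lemma cross_marg_pinned_support:
  assumes f: "\<forall>v\<in>idx_tuples k 4. \<not> pinned v \<and> v \<noteq> [0, 0, 0, 0] \<longrightarrow> f v = 0"
    and "a < k" "c < k"
  shows "cross_marg k f a c
    = (if a < c then f [a, a, c, c] else 0) + (if a = 0 \<and> c = 0 then f [0, 0, 0, 0] else 0)"
proof -
  let ?S = "{v \<in> idx_tuples k 4. v ! 0 = a \<and> v ! 2 = c}"
  have "cross_marg k f a c = (\<Sum>v\<in>?S. (if v = [a, a, c, c] then if a < c then f v else 0 else 0)
      + (if v = [0, 0, 0, 0] then if a = 0 \<and> c = 0 then f v else 0 else 0))"
    unfolding cross_marg_def
  proof (intro sum.cong refl)
    fix v assume "v \<in> ?S"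
    then obtain b d where "v = [a, b, c, d]" "v \<in> idx_tuples k 4"
      by (auto elim!: idx_tuples_4_cases)
    then show "f v = (if v = [a, a, c, c] then if a < c then f v else 0 else 0)
      + (if v = [0, 0, 0, 0] then if a = 0 \<and> c = 0 then f v else 0 else 0)"
      using f by auto
  qed
  also have "\<dots> = (if a < c then f [a, a, c, c] else 0)
      + (if a = 0 \<and> c = 0 then f [0, 0, 0, 0] else 0)"
    using assms(2,3) by (simp add: sum.distrib)
  finally show ?thesis .
qed

lemma balanced4_directions_determined:
  assumes g: "g \<in> balanced4_directions k" and free: "\<forall>p\<in>free_tuples k. g p = 0"
  shows "g = 0"
proof -
  have inv: "balanced4_invariant k g" and sum_g: "sum g (idx_tuples k 4) = 0"
    using g by (auto simp: balanced4_directions_def)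
  then have off: "\<forall>v\<in>idx_tuples k 4. \<not> pinned v \<and> v \<noteq> [0, 0, 0, 0] \<longrightarrow> g v = 0"
    using free swap_invariant_sort_cherries sort_cherries_in_free_tuples_iff
    by (metis balanced4_invariant_def)
  have pinned_zero: "g [a, a, c, c] = 0" if "a < c" "c < k" for a c
    using inv that cross_marg_pinned_support[OF off, of a c]
      cross_marg_pinned_support[OF off, of c a]
    by (auto simp: balanced4_invariant_def)
  have nonzero: "\<forall>v\<in>idx_tuples k 4. v \<noteq> [0, 0, 0, 0] \<longrightarrow> g v = 0"
  proof (intro ballI impI)
    fix v assume v: "v \<in> idx_tuples k 4" "v \<noteq> [0, 0, 0, 0]"
    show "g v = 0"
    proof (cases "pinned v")
      case True
      with v show ?thesis using pinned_zero by (auto elim!: idx_tuples_4_cases)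
    qed (use off v in blast)
  qed
  have "g [0, 0, 0, 0] = 0"
  proof (cases "[0, 0, 0, 0] \<in> idx_tuples k 4")
    case True
    then have "sum g (idx_tuples k 4) = sum g {[0, 0, 0, 0]}"
      using nonzero by (intro sum.mono_neutral_right) auto
    then show ?thesis using sum_g by simp
  next
    case False
    then show ?thesis using inv by (simp add: balanced4_invariant_def tensors_def)
  qed
  moreover have "\<forall>v. v \<notin> idx_tuples k 4 \<longrightarrow> g v = 0"
    using inv by (simp add: balanced4_invariant_def tensors_def)
  ultimately show "g = 0"
    using nonzero by (intro ext) (metis zero_fun_apply)
qed

definition pin_correction :: "nat \<Rightarrow> (nat list \<Rightarrow> real) \<Rightarrow> nat list \<Rightarrow> real" where
  "pin_correction k h v = (if v \<in> idx_tuples k 4 \<and> pinned v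
     then cross_marg k h (v ! 2) (v ! 0) - cross_marg k h (v ! 0) (v ! 2) else 0)"

lemma balanced4_invariant_add_pin_correction:
  assumes h: "h \<in> tensors k 4" "swap_invariant k 4 0 1 h" "swap_invariant k 4 2 3 h"
  shows "balanced4_invariant k (h + pin_correction k h)"
proof -
  have "cross_marg k (pin_correction k h) a c
      = (if a < c then cross_marg k h c a - cross_marg k h a c else 0)" if "a < k" "c < k" for a c
    using cross_marg_pinned_support[of k "pin_correction k h" a c] that
    by (simp add: pin_correction_def)
  then have "cross_marg k (h + pin_correction k h) a c = cross_marg k (h + pin_correction k h) c a"
    if "a < k" "c < k" for a c
    using that by (simp add: cross_marg_add)
  moreover have "swap_invariant k 4 0 1 (pin_correction k h)"
    "swap_invariant k 4 2 3 (pin_correction k h)"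
    unfolding swap_invariant_def
    by (auto elim!: idx_tuples_4_cases simp: pin_correction_def swap_idx_def)
  ultimately show ?thesis
    using h
    by (auto simp: balanced4_invariant_def tensors_def swap_invariant_def pin_correction_def)
qed

lemma balanced4_invariant_indicator_zero:
  assumes "0 < k"
  shows "balanced4_invariant k (indicator {[0, 0, 0, 0]})"
proof -
  have "cross_marg k (indicator {[0, 0, 0, 0]}) a c = (if a = 0 \<and> c = 0 then 1 else 0)"
    if "a < k" "c < k" for a c
    using cross_marg_pinned_support[of k "indicator {[0, 0, 0, 0]}" a c] that by simp
  then show ?thesis
    using assms unfolding balanced4_invariant_def tensors_def swap_invariant_def
    by (auto elim!: idx_tuples_4_cases simp: swap_idx_def indicator_def)
qed

lemma sum_indicator_zero_tuple:
  "0 < k \<Longrightarrow> sum (indicator {[0, 0, 0, 0]}) (idx_tuples k 4) = (1 :: real)"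
  by (simp add: indicator_def)

definition balanced4_completion :: "nat \<Rightarrow> (nat list \<Rightarrow> real) \<Rightarrow> nat list \<Rightarrow> real" where
  "balanced4_completion k h = h + pin_correction k h
     - fscale (sum (h + pin_correction k h) (idx_tuples k 4)) (indicator {[0, 0, 0, 0]})"

lemma balanced4_completion_in_directions:
  assumes "0 < k" "h \<in> tensors k 4" "swap_invariant k 4 0 1 h" "swap_invariant k 4 2 3 h"
  shows "balanced4_completion k h \<in> balanced4_directions k"
proof -
  have "balanced4_invariant k (balanced4_completion k h)"
    unfolding balanced4_completion_def
    using assms by (intro balanced4_invariant_diff balanced4_invariant_fscale
        balanced4_invariant_add_pin_correction balanced4_invariant_indicator_zero)
  moreover have "sum (balanced4_completion k h) (idx_tuples k 4) = 0"
    using sum_indicator_zero_tuple[OF assms(1)]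
    by (simp add: balanced4_completion_def sum_subtractf fscale_def sum_distrib_left[symmetric])
  ultimately show ?thesis by (simp add: balanced4_directions_def)
qed

lemma balanced4_completion_free_tuple:
  "s \<in> free_tuples k \<Longrightarrow> balanced4_completion k h s = h s"
  by (simp add: balanced4_completion_def pin_correction_def fscale_def free_tuples_def)

lemma model_diffs_balanced4:
  assumes "0 < k"
  shows "{P - Q | P Q. P \<in> model_space k 4 balanced4 \<and> Q \<in> model_space k 4 balanced4}
    = balanced4_directions k"
proof (intro equalityI subsetI)
  fix g assume g: "g \<in> balanced4_directions k"
  have zero_model: "indicator {[0, 0, 0, 0]} \<in> model_space k 4 balanced4"
    using assms by (simp add: model_space_balanced4 balanced4_invariant_indicator_zero
        sum_indicator_zero_tuple)
  moreover have "g + indicator {[0, 0, 0, 0]} \<in> model_space k 4 balanced4"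
    using g zero_model
    by (simp add: model_space_balanced4 balanced4_directions_def balanced4_invariant_add
        sum.distrib)
  ultimately show "g \<in> {P - Q | P Q. P \<in> model_space k 4 balanced4 \<and> Q \<in> model_space k 4 balanced4}"
    by force
qed (use model_space_diff_in_directions in blast)

definition free_dual :: "nat \<Rightarrow> nat list \<Rightarrow> nat list \<Rightarrow> real" where
  "free_dual k p = balanced4_completion k (indicator {v \<in> idx_tuples k 4. sort_cherries v = p})"

lemma free_dual_in_directions: "0 < k \<Longrightarrow> free_dual k p \<in> balanced4_directions k"
  unfolding free_dual_def
  by (intro balanced4_completion_in_directions)
     (auto simp: tensors_def swap_invariant_def indicator_def swap_idx_def min.commute max.commute
       elim!: idx_tuples_4_cases)

lemma free_dual_apply:
  "p \<in> free_tuples k \<Longrightarrow> q \<in> free_tuples k \<Longrightarrow> free_dual k p q = (if p = q then 1 else 0)"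
  using sort_cherries_free_tuple[of q k]
  by (auto simp: free_dual_def balanced4_completion_free_tuple indicator_def free_tuples_def)

lemma d_kappa_balanced4_eq_card_free_tuples:
  assumes "0 < k"
  shows "d_kappa k 4 balanced4 = card (free_tuples k)"
proof -
  have "fs.dim (balanced4_directions k) = card (free_tuples k)"
    by (rule dim_eq_card_of_dual_family[OF subspace_balanced4_directions _
          balanced4_directions_determined free_dual_in_directions[OF assms] free_dual_apply])
       (simp add: free_tuples_def)
  then show ?thesis
    by (simp add: d_kappa_def affine_dim_def model_diffs_balanced4[OF assms])
qed

lemma Suc_choose_two: "Suc n choose 2 = n + (n choose 2)"
  by (simp add: numeral_2_eq_2)

lemma real_choose_two: "real (n choose 2) = real n * (real n - 1) / 2"
  by (induction n) (simp_all add: Suc_choose_two algebra_simps)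

lemma card_less_pairs: "card {(a, c). a < c \<and> c < k} = k choose 2"
proof (induction k)
  case (Suc k)
  have "{(a, c). a < c \<and> c < Suc k} = {(a, c). a < c \<and> c < k} \<union> (\<lambda>a. (a, k)) ` {..<k}"
    by auto
  moreover have "card ({(a, c). a < c \<and> c < k} \<union> (\<lambda>a. (a, k)) ` {..<k})
      = card {(a, c). a < c \<and> c < k} + card ((\<lambda>a. (a, k)) ` {..<k})"
    by (rule card_Un_disjoint) (auto intro: finite_subset[of _ "{..<k} \<times> {..<k}"])
  moreover have "card ((\<lambda>a. (a, k)) ` {..<k}) = k"
    by (simp add: card_image inj_on_def)
  ultimately have "card {(a, c). a < c \<and> c < Suc k} = card {(a, c). a < c \<and> c < k} + k"
    by simp
  then show ?case using Suc Suc_choose_two by simp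
qed simp

lemma card_le_pairs: "card {(a, b). a \<le> b \<and> b < k} = Suc k choose 2"
proof -
  let ?shift = "\<lambda>(a, b). (a, Suc b)"
  have shift_image: "?shift ` {(a, b). a \<le> b \<and> b < k} = {(a, c). a < c \<and> c < Suc k}"
  proof (intro equalityI subsetI)
    fix p assume "p \<in> {(a, c). a < c \<and> c < Suc k}"
    then obtain a c where "p = (a, c)" "a < c" "c < Suc k" by blast
    then show "p \<in> ?shift ` {(a, b). a \<le> b \<and> b < k}"
      by (intro image_eqI[of _ _ "(a, c - 1)"]) auto
  qed fastforce
  have "inj_on ?shift {(a, b). a \<le> b \<and> b < k}"
    by (rule inj_onI) fastforce
  then have "card {(a, b). a \<le> b \<and> b < k} = card (?shift ` {(a, b). a \<le> b \<and> b < k})"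
    by (simp add: card_image)
  also have "\<dots> = Suc k choose 2"
    unfolding shift_image by (rule card_less_pairs)
  finally show ?thesis .
qed

lemma card_free_tuples:
  assumes "0 < k"
  shows "card (free_tuples k) + (k choose 2) + 1 = (Suc k choose 2) ^ 2"
proof -
  define sorted where "sorted = {s \<in> idx_tuples k 4. s ! 0 \<le> s ! 1 \<and> s ! 2 \<le> s ! 3}"
  define pinned_tuples where "pinned_tuples = {s \<in> idx_tuples k 4. pinned s}"
  have "sorted = (free_tuples k \<union> pinned_tuples) \<union> {[0, 0, 0, 0]}"
    using assms by (auto simp: sorted_def pinned_tuples_def free_tuples_def pinned_def)
  moreover have "card (free_tuples k \<union> pinned_tuples) = card (free_tuples k) + card pinned_tuples"
    by (rule card_Un_disjoint) (auto simp: free_tuples_def pinned_tuples_def)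
  ultimately have "card sorted = card (free_tuples k) + card pinned_tuples + 1"
    by (simp add: free_tuples_def pinned_tuples_def)
  moreover have "pinned_tuples = (\<lambda>(a, c). [a, a, c, c]) ` {(a, c). a < c \<and> c < k}"
    by (auto simp: pinned_tuples_def image_iff elim!: idx_tuples_4_cases)
  then have "card pinned_tuples = k choose 2"
    by (simp add: card_image inj_on_def card_less_pairs)
  moreover have "sorted = (\<lambda>((a, b), (c, d)). [a, b, c, d]) `
      ({(a, b). a \<le> b \<and> b < k} \<times> {(a, b). a \<le> b \<and> b < k})"
    by (auto simp: sorted_def image_iff elim!: idx_tuples_4_cases)
  then have "card sorted = (Suc k choose 2) ^ 2"
    by (simp add: card_image inj_on_def card_cartesian_product card_le_pairs power2_eq_square)
  ultimately show ?thesis by simp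
qed

theorem mainTheorem9:
  fixes k :: nat
  assumes "k \<ge> 2"
  shows "real (d_kappa k 4 balanced4)
           = ((real k ^ 2 + real k) / 2) ^ 2 - real (k choose 2) - 1
       \<and> real (d_kappa k 4 balanced4)
           = real k * (real k ^ 3 + 2 * real k ^ 2 - real k + 2) / 4 - 1
       \<and> real (d_kappa k 4 balanced4) \<noteq> (real k ^ 4 + real k) / 2 - 1"
proof -
  have k: "0 < k" using assms by simp
  have "real (d_kappa k 4 balanced4) = real (Suc k choose 2) ^ 2 - real (k choose 2) - 1"
    using arg_cong[OF card_free_tuples[OF k], of real]
    by (simp add: d_kappa_balanced4_eq_card_free_tuples[OF k])
  moreover have "real (Suc k choose 2) = (real k ^ 2 + real k) / 2"
    by (simp add: real_choose_two power2_eq_square algebra_simps)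
  ultimately have "real (d_kappa k 4 balanced4)
      = ((real k ^ 2 + real k) / 2) ^ 2 - real (k choose 2) - 1"
    by simp
  moreover have "\<dots> = real k * (real k ^ 3 + 2 * real k ^ 2 - real k + 2) / 4 - 1"
    by (simp add: real_choose_two field_simps power2_eq_square power3_eq_cube power4_eq_xxxx)
  moreover have "\<dots> = (real k ^ 4 + real k) / 2 - 1 - (real k * (real k - 1)) ^ 2 / 4"
    by (simp add: field_simps power2_eq_square power3_eq_cube power4_eq_xxxx)
  moreover have "(real k * (real k - 1)) ^ 2 > 0" using assms by simp
  ultimately show ?thesis by linarith
qed

end
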